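(* Let $G$ be a graph. For any two maximum matchings $F, F'$ of $G$ we have $\nu(G\setminus F')\le 2\,\nu(G\setminus F)$. Consequently $L(G)\le 2\,l(G)$.
   Context: Graphs are finite, undirected, without loops or multiple edges. $\nu(G)$ denotes the maximum size of a matching of $G$; a matching is maximum if it has $\nu(G)$ edges. For $F\subseteq E(G)$, $G\setminus F$ is the graph with vertex set $V(G)$ and edge set $E(G)\setminus F$. Define $L(G)=\max\{\nu(G\setminus F): F \text{ a maximum matching of } G\}$ and $l(G)=\min\{\nu(G\setminus F): F \text{ a maximum matching of } G\}$. *)

theory Defs
  imports Main
begin

definition graph :: "'a set \<Rightarrow> 'a set set \<Rightarrow> bool" where
  "graph V E \<longleftrightarrow> finite V \<and> (\<forall>e\<in>E. \<exists>u v. e = {u, v} \<and> u \<noteq> v \<and> u \<in> V \<and> v \<in> V)"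

definition matching :: "'a set \<Rightarrow> 'a set set \<Rightarrow> 'a set set \<Rightarrow> bool" where
  "matching V E M \<longleftrightarrow> M \<subseteq> E \<and> (\<forall>e1\<in>M. \<forall>e2\<in>M. e1 \<noteq> e2 \<longrightarrow> e1 \<inter> e2 = {})"

definition nu :: "'a set \<Rightarrow> 'a set set \<Rightarrow> nat" where
  "nu V E = Max (card ` {M. matching V E M})"

definition max_matching :: "'a set \<Rightarrow> 'a set set \<Rightarrow> 'a set set \<Rightarrow> bool" where
  "max_matching V E M \<longleftrightarrow> matching V E M \<and> card M = nu V E"

definition L_max :: "'a set \<Rightarrow> 'a set set \<Rightarrow> nat" where
  "L_max V E = Max ((\<lambda>F. nu V (E - F)) ` {F. max_matching V E F})"

definition l_min :: "'a set \<Rightarrow> 'a set set \<Rightarrow> nat" where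
  "l_min V E = Min ((\<lambda>F. nu V (E - F)) ` {F. max_matching V E F})"

end

theory Submission
  imports Defs
begin

(* Let F, F' be maximum matchings and let M be a maximum matching
   of G \ F'.  Split M into M - F and M \<inter> F.  The part M - F is a matching
   of G \ F, so it has at most nu(G \ F) edges.  Since M avoids F', the part
   M \<inter> F lies in F - F', and |F - F'| \<le> |F' - F| because |F| \<le> |F'|.  As
   F' - F is again a matching of G \ F, also |M \<inter> F| \<le> nu(G \ F).
   Hence nu(G \ F') = |M| \<le> 2 nu(G \ F). *)

lemma graph_finite_edges:
  assumes "graph V E"
  shows "finite E"
proof -
  have "E \<subseteq> Pow V" and "finite V" using assms unfolding graph_def by fastforce+
  then show ?thesis by (simp add: finite_subset)
qed

lemma finite_matchings: "finite E \<Longrightarrow> finite {M. matching V E M}"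
  by (rule finite_subset[of _ "Pow E"]) (auto simp: matching_def)

lemma card_le_nu: "finite E \<Longrightarrow> matching V E M \<Longrightarrow> card M \<le> nu V E"
  unfolding nu_def using finite_matchings by (intro Max_ge) auto

lemma max_matching_exists:
  assumes "finite E"
  shows "\<exists>M. max_matching V E M"
proof -
  have "{} \<in> {M. matching V E M}" by (simp add: matching_def)
  then have "nu V E \<in> card ` {M. matching V E M}"
    unfolding nu_def using finite_matchings[OF assms] by (intro Max_in) auto
  then show ?thesis unfolding max_matching_def by auto
qed

lemma matching_restrict:
  "matching V E M \<Longrightarrow> N \<subseteq> M \<Longrightarrow> N \<subseteq> E' \<Longrightarrow> matching V E' N"
  unfolding matching_def by blast

lemma card_diff_le_card_diff:
  assumes "finite F" "finite F'" "card F \<le> card F'"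
  shows "card (F - F') \<le> card (F' - F)"
proof -
  have "card (F - F') = card F - card (F \<inter> F')"
    using assms by (simp add: card_Diff_subset_Int)
  moreover have "card (F' - F) = card F' - card (F \<inter> F')"
    using assms by (simp add: card_Diff_subset_Int Int_commute)
  ultimately show ?thesis using assms(3) by simp
qed

lemma nu_remove_le_twice:
  assumes E: "finite E" and F: "finite F"
    and F': "matching V E F'" and size: "card F \<le> card F'"
  shows "nu V (E - F') \<le> 2 * nu V (E - F)"
proof -
  obtain M where M: "max_matching V (E - F') M"
    using max_matching_exists E by blast
  have M_sub: "M \<subseteq> E - F'" using M unfolding max_matching_def matching_def by simp
  have F'_sub: "F' \<subseteq> E" using F' unfolding matching_def by simp
  have "finite M" "finite F'" using M_sub F'_sub E by (auto intro: finite_subset)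
  have "matching V (E - F') M" using M by (simp add: max_matching_def)
  then have "matching V (E - F) (M - F)"
    by (rule matching_restrict) (use M_sub in auto)
  then have outside_F: "card (M - F) \<le> nu V (E - F)" using E by (simp add: card_le_nu)
  have "card (M \<inter> F) \<le> card (F - F')"
    using M_sub F by (intro card_mono) auto
  also have "\<dots> \<le> card (F' - F)"
    using card_diff_le_card_diff F \<open>finite F'\<close> size .
  also have "\<dots> \<le> nu V (E - F)"
    using E matching_restrict[OF F', of "F' - F" "E - F"] F'_sub
    by (simp add: card_le_nu Diff_mono)
  finally have inside_F: "card (M \<inter> F) \<le> nu V (E - F)" .
  have "nu V (E - F') = card (M - F) + card (M \<inter> F)"
    using M \<open>finite M\<close> by (simp add: max_matching_def card_Int_Diff[of M F])
  with outside_F inside_F show ?thesis by linarith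
qed

lemma max_le_twice_min:
  fixes f :: "'b \<Rightarrow> nat"
  assumes "finite S" "S \<noteq> {}" "\<And>x y. x \<in> S \<Longrightarrow> y \<in> S \<Longrightarrow> f y \<le> 2 * f x"
  shows "Max (f ` S) \<le> 2 * Min (f ` S)"
proof -
  have "Max (f ` S) \<in> f ` S" "Min (f ` S) \<in> f ` S"
    using assms(1,2) by (simp_all add: Max_in Min_in)
  then obtain a b where "a \<in> S" "Max (f ` S) = f a" "b \<in> S" "Min (f ` S) = f b"
    by (metis imageE)
  then show ?thesis using assms(3) by auto
qed

theorem theorem2:
  fixes V :: "'a set" and E :: "'a set set"
  assumes "graph V E"
  shows "(\<forall>F F'. max_matching V E F \<and> max_matching V E F' \<longrightarrow>
            nu V (E - F') \<le> 2 * nu V (E - F))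
         \<and> L_max V E \<le> 2 * l_min V E"
proof -
  have E: "finite E" using graph_finite_edges[OF assms] .
  have pairwise: "nu V (E - F') \<le> 2 * nu V (E - F)"
    if "max_matching V E F" "max_matching V E F'" for F F'
  proof (rule nu_remove_le_twice[OF E])
    show "finite F" using that(1) E by (auto simp: max_matching_def matching_def
        intro: finite_subset)
    show "matching V E F'" "card F \<le> card F'" using that by (auto simp: max_matching_def)
  qed
  have "finite {F. max_matching V E F}"
    by (rule finite_subset[OF _ finite_matchings[OF E]]) (auto simp: max_matching_def)
  moreover have "{F. max_matching V E F} \<noteq> {}" using max_matching_exists[OF E] by auto
  ultimately have "L_max V E \<le> 2 * l_min V E"
    unfolding L_max_def l_min_def using pairwise by (intro max_le_twice_min) auto
  with pairwise show ?thesis by blast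
qed

end
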